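(* Let $d,n\ge1$ and $M=\begin{bmatrix} I_n & 0\\ 0& 0\end{bmatrix}\in\mathbb{R}^{(n+1)\times(n+1)}$. Let $A_0,A_1,\dots$ and $B_0,B_1,\dots$ be matrices in $\mathbb{R}^{d\times d}$ with each $A_i$ symmetric. Given $X_0\in\mathbb{R}^{d\times(n+1)}$ and $Y_0\in\mathbb{R}^{1\times(n+1)}$, define for $i\ge0$ $$X_{i+1}=X_i+\tfrac1nB_iX_iMX_i^\top A_iX_i,\qquad Y_{i+1}=Y_i+\tfrac1nY_iMX_i^\top A_iX_i.$$ Let $c\in\mathbb{R}$, $C=[0,0,\dots,0,c]\in\mathbb{R}^{1\times(n+1)}$, and let $X_i',Y_i'$ be defined by the same recursion started from $X_0'=X_0$, $Y_0'=Y_0+C$. Then for every $i\ge0$, $X_i'=X_i$ and $Y_i'=Y_i+C$. In particular, $X_i$ and the entries $[Y_i]_j$ for $j\neq n+1$ do not depend on $[Y_0]_{n+1}$, and $[Y_i]_{n+1}$ depends additively on $[Y_0]_{n+1}$. *)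

theory Defs
  imports "Jordan_Normal_Form.Matrix"
begin

definition Mmask :: "nat \<Rightarrow> real mat" where
  "Mmask n = four_block_mat (1\<^sub>m n) (0\<^sub>m n 1) (0\<^sub>m 1 n) (0\<^sub>m 1 1)"

fun XY :: "nat \<Rightarrow> (nat \<Rightarrow> real mat) \<Rightarrow> (nat \<Rightarrow> real mat) \<Rightarrow> real mat \<Rightarrow> real mat
            \<Rightarrow> nat \<Rightarrow> real mat \<times> real mat" where
  "XY n A B X0 Y0 0 = (X0, Y0)"
| "XY n A B X0 Y0 (Suc i) =
     (let (X, Y) = XY n A B X0 Y0 i in
       (X + (1 / real n) \<cdot>\<^sub>m (B i * X * Mmask n * transpose_mat X * A i * X),
        Y + (1 / real n) \<cdot>\<^sub>m (Y * Mmask n * transpose_mat X * A i * X)))"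

end

theory Submission
  imports Defs
begin

text \<open>The increments of both recursions depend on \<open>Y\<^sub>i\<close> only through \<open>Y\<^sub>i M\<close>, and the
  \<open>X\<close>-recursion does not involve \<open>Y\<^sub>i\<close> at all. Since \<open>M\<close> annihilates the last coordinate,
  \<open>C M = 0\<close>, so shifting \<open>Y\<^sub>0\<close> by \<open>C\<close> changes neither \<open>X\<^sub>i\<close> nor any increment of \<open>Y\<^sub>i\<close>.\<close>

lemma Mmask_carrier_mat: "Mmask n \<in> carrier_mat (n + 1) (n + 1)"
  unfolding Mmask_def by (rule four_block_carrier_mat) auto

lemma index_Mmask:
  "i < n + 1 \<Longrightarrow> j < n + 1 \<Longrightarrow> Mmask n $$ (i, j) = (if i = j \<and> i < n then 1 else 0)"
  unfolding Mmask_def by auto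

lemma mult_Mmask_eq_zero:
  assumes C: "C \<in> carrier_mat k (n + 1)"
    and last_column: "\<And>r j. r < k \<Longrightarrow> j < n \<Longrightarrow> C $$ (r, j) = 0"
  shows "C * Mmask n = 0\<^sub>m k (n + 1)"
proof (rule eq_matI)
  fix r j assume r: "r < dim_row (0\<^sub>m k (n + 1))" and j: "j < dim_col (0\<^sub>m k (n + 1))"
  have "(C * Mmask n) $$ (r, j) = (\<Sum>l = 0..<n + 1. C $$ (r, l) * Mmask n $$ (l, j))"
    using r j C Mmask_carrier_mat[of n] by (simp add: scalar_prod_def)
  also have "\<dots> = 0"
    using r j by (intro sum.neutral) (auto simp: index_Mmask last_column)
  finally show "(C * Mmask n) $$ (r, j) = 0\<^sub>m k (n + 1) $$ (r, j)"
    using r j by simp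
qed (use C Mmask_carrier_mat[of n] in auto)

lemma fst_XY_Suc:
  "fst (XY n A B X0 Y0 (Suc i)) =
     (let X = fst (XY n A B X0 Y0 i)
      in X + (1 / real n) \<cdot>\<^sub>m (B i * X * Mmask n * transpose_mat X * A i * X))"
  by (simp add: case_prod_beta Let_def)

lemma snd_XY_Suc:
  "snd (XY n A B X0 Y0 (Suc i)) =
     (let X = fst (XY n A B X0 Y0 i); Y = snd (XY n A B X0 Y0 i)
      in Y + (1 / real n) \<cdot>\<^sub>m (Y * Mmask n * transpose_mat X * A i * X))"
  by (simp add: case_prod_beta Let_def)

lemma fst_XY_indep_Y0: "fst (XY n A B X0 Y0 i) = fst (XY n A B X0 Y0' i)"
  by (induction i) (simp_all add: fst_XY_Suc del: XY.simps(2))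

lemma fst_XY_carrier_mat:
  assumes "\<And>i. B i \<in> carrier_mat d d" and "X0 \<in> carrier_mat d m"
  shows "fst (XY n A B X0 Y0 i) \<in> carrier_mat d m"
proof (induction i)
  case (Suc i)
  with assms(1)[of i] show ?case
    unfolding fst_XY_Suc Let_def carrier_mat_def by simp
qed (use assms in simp)

lemma snd_XY_carrier_mat:
  assumes "\<And>i. B i \<in> carrier_mat d d" and "X0 \<in> carrier_mat d m" and "Y0 \<in> carrier_mat k m"
  shows "snd (XY n A B X0 Y0 i) \<in> carrier_mat k m"
proof (induction i)
  case (Suc i)
  have "fst (XY n A B X0 Y0 i) \<in> carrier_mat d m"
    using assms(1,2) by (rule fst_XY_carrier_mat)
  with Suc show ?case
    unfolding snd_XY_Suc Let_def carrier_mat_def by simp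
qed (use assms in simp)

lemma snd_XY_add_Mmask_kernel:
  assumes B: "\<And>i. B i \<in> carrier_mat d d" and X0: "X0 \<in> carrier_mat d (n + 1)"
    and Y0: "Y0 \<in> carrier_mat k (n + 1)"
    and C: "C \<in> carrier_mat k (n + 1)" and CM: "C * Mmask n = 0\<^sub>m k (n + 1)"
  shows "snd (XY n A B X0 (Y0 + C) i) = snd (XY n A B X0 Y0 i) + C"
proof (induction i)
  case (Suc i)
  define X where "X = fst (XY n A B X0 Y0 i)"
  define Y where "Y = snd (XY n A B X0 Y0 i)"
  have X: "X \<in> carrier_mat d (n + 1)"
    unfolding X_def using B X0 by (rule fst_XY_carrier_mat)
  have Y: "Y \<in> carrier_mat k (n + 1)"
    unfolding Y_def using B X0 Y0 by (rule snd_XY_carrier_mat)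
  define S where "S = (1 / real n) \<cdot>\<^sub>m (Y * Mmask n * transpose_mat X * A i * X)"
  have S: "S \<in> carrier_mat k (n + 1)"
    unfolding S_def using X Y by auto
  have YCM: "(Y + C) * Mmask n = Y * Mmask n"
    using add_mult_distrib_mat[OF Y C Mmask_carrier_mat] CM Y Mmask_carrier_mat[of n] by simp
  have "snd (XY n A B X0 (Y0 + C) (Suc i)) = Y + C + S"
    unfolding snd_XY_Suc Let_def fst_XY_indep_Y0[of n A B X0 "Y0 + C" i Y0] Suc
    unfolding X_def [symmetric] Y_def [symmetric] YCM S_def ..
  also have "\<dots> = Y + S + C"
    using Y C S by (simp add: comm_add_mat[OF C S])
  finally show ?case
    unfolding snd_XY_Suc Let_def X_def [symmetric] Y_def [symmetric] S_def .
qed simp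

theorem lemma6:
  fixes d n :: nat and A B :: "nat \<Rightarrow> real mat" and X0 Y0 :: "real mat" and c :: real
  assumes "d \<ge> 1" and "n \<ge> 1"
    and "\<And>i. A i \<in> carrier_mat d d" and "\<And>i. B i \<in> carrier_mat d d"
    and "\<And>i. transpose_mat (A i) = A i"
    and "X0 \<in> carrier_mat d (n + 1)" and "Y0 \<in> carrier_mat 1 (n + 1)"
  defines "C \<equiv> mat 1 (n + 1) (\<lambda>(r, j). if j = n then c else 0)"
  shows "\<forall>i. fst (XY n A B X0 (Y0 + C) i) = fst (XY n A B X0 Y0 i)
            \<and> snd (XY n A B X0 (Y0 + C) i) = snd (XY n A B X0 Y0 i) + C"
proof
  fix i
  have C: "C \<in> carrier_mat 1 (n + 1)"
    unfolding C_def by simp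
  have "C * Mmask n = 0\<^sub>m 1 (n + 1)"
    using C by (rule mult_Mmask_eq_zero) (simp add: C_def)
  with assms(4,6,7) C have "snd (XY n A B X0 (Y0 + C) i) = snd (XY n A B X0 Y0 i) + C"
    by (rule snd_XY_add_Mmask_kernel)
  then show "fst (XY n A B X0 (Y0 + C) i) = fst (XY n A B X0 Y0 i)
            \<and> snd (XY n A B X0 (Y0 + C) i) = snd (XY n A B X0 Y0 i) + C"
    using fst_XY_indep_Y0 by blast
qed

end
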